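(* Let $M$ be a transitive model of $\mathsf{ZF}$, let $A\subseteq\omega$ be evasive with respect to $M$, and let $\mathbb{P}=\mathbb{H}^M$. Let $\mathcal{D}\in M$ be an open dense subset of $\mathbb{P}$ (in $M$), and let $T\in\mathbb{P}$. Then there is $T'\in\mathcal{D}$ with $T'\le_A T$.
   Context: $\mathbb{H}$ is the poset of all trees $T \subseteq \omega^{<\omega}$ such that for every $t \in T$ with $t \sqsupseteq \mathrm{Stem}(T)$, the set $\{z\in\omega : t^\frown z \notin T\}$ is finite, ordered by inclusion; $\mathrm{Stem}(T)$ is the maximal node of $T$ comparable with every node of $T$; $\mathbb{H}^M$ is this poset computed in $M$. A set $A\subseteq\omega$ is evasive with respect to $M$ iff $A$ is infinite and no infinite subset of $A$ belongs to $M$. For $t,t'\in\omega^{<\omega}$, $t'\sqsupseteq_A t$ iff $t'\sqsupseteq t$ and $t'(n)\notin A$ for all $n\in\mathrm{dom}(t')\setminus\mathrm{dom}(t)$. For $T,T'\in\mathbb{H}$, $T'\le_A T$ iff $T'\subseteq T$ and $\mathrm{Stem}(T')\sqsupseteq_A\mathrm{Stem}(T)$. *)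

theory Defs
  imports Main "HOL-Library.Sublist"
begin

text \<open>A transitive model of ZF is represented (up to Mostowski collapse) by a well-founded,
  extensional structure satisfying the ZF axioms; the separation and replacement schemas
  quantify over first-order formulas of the language of set theory.\<close>

datatype fm = Mem nat nat | Equ nat nat | Neg fm | Conj fm fm | Ex nat fm

primrec sat :: "('m \<Rightarrow> 'm \<Rightarrow> bool) \<Rightarrow> fm \<Rightarrow> (nat \<Rightarrow> 'm) \<Rightarrow> bool" where
  "sat E (Mem i j) env = E (env i) (env j)"
| "sat E (Equ i j) env = (env i = env j)"
| "sat E (Neg p) env = (\<not> sat E p env)"
| "sat E (Conj p q) env = (sat E p env \<and> sat E q env)"
| "sat E (Ex i p) env = (\<exists>x. sat E p (env(i := x)))"

definition transitive_ZF_model :: "('m \<Rightarrow> 'm \<Rightarrow> bool) \<Rightarrow> bool" where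
  "transitive_ZF_model E \<longleftrightarrow>
     wfP E
   \<and> (\<forall>x y. (\<forall>z. E z x \<longleftrightarrow> E z y) \<longrightarrow> x = y)
   \<and> (\<forall>x y. \<exists>z. E x z \<and> E y z)
   \<and> (\<forall>x. \<exists>u. \<forall>y z. E y x \<and> E z y \<longrightarrow> E z u)
   \<and> (\<forall>x. \<exists>p. \<forall>y. (\<forall>z. E z y \<longrightarrow> E z x) \<longrightarrow> E y p)
   \<and> (\<exists>w. (\<exists>e. E e w \<and> (\<forall>z. \<not> E z e))
          \<and> (\<forall>y. E y w \<longrightarrow> (\<exists>s. E s w \<and> (\<forall>z. E z s \<longleftrightarrow> E z y \<or> z = y))))
   \<and> (\<forall>\<phi> env i a. \<exists>b. \<forall>x. E x b \<longleftrightarrow> E x a \<and> sat E \<phi> (env(i := x)))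
   \<and> (\<forall>\<phi> env i j a. i \<noteq> j \<longrightarrow>
         (\<forall>x. E x a \<longrightarrow> (\<exists>!y. sat E \<phi> (env(i := x, j := y)))) \<longrightarrow>
         (\<exists>b. \<forall>x. E x a \<longrightarrow> (\<exists>y. E y b \<and> sat E \<phi> (env(i := x, j := y)))))"

primrec codes_nat :: "('m \<Rightarrow> 'm \<Rightarrow> bool) \<Rightarrow> 'm \<Rightarrow> nat \<Rightarrow> bool" where
  "codes_nat E x 0 = (\<forall>z. \<not> E z x)"
| "codes_nat E x (Suc n) = (\<exists>y. codes_nat E y n \<and> (\<forall>z. E z x \<longleftrightarrow> E z y \<or> z = y))"

definition is_pair :: "('m \<Rightarrow> 'm \<Rightarrow> bool) \<Rightarrow> 'm \<Rightarrow> 'm \<Rightarrow> 'm \<Rightarrow> bool" where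
  "is_pair E p a b \<longleftrightarrow>
     (\<forall>z. E z p \<longleftrightarrow> ((\<forall>w. E w z \<longleftrightarrow> w = a) \<or> (\<forall>w. E w z \<longleftrightarrow> w = a \<or> w = b)))"

text \<open>An element of \<omega>^{<\<omega>}: a function from a natural number n to \<omega>.\<close>
definition codes_seq :: "('m \<Rightarrow> 'm \<Rightarrow> bool) \<Rightarrow> 'm \<Rightarrow> nat list \<Rightarrow> bool" where
  "codes_seq E y l \<longleftrightarrow>
     (\<forall>p. E p y \<longleftrightarrow> (\<exists>i<length l. \<exists>a b. codes_nat E a i \<and> codes_nat E b (l ! i) \<and> is_pair E p a b))"

definition codes_natset :: "('m \<Rightarrow> 'm \<Rightarrow> bool) \<Rightarrow> 'm \<Rightarrow> nat set \<Rightarrow> bool" where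
  "codes_natset E x B \<longleftrightarrow> (\<forall>z. E z x \<longleftrightarrow> (\<exists>n\<in>B. codes_nat E z n))"

definition codes_tree :: "('m \<Rightarrow> 'm \<Rightarrow> bool) \<Rightarrow> 'm \<Rightarrow> nat list set \<Rightarrow> bool" where
  "codes_tree E t S \<longleftrightarrow> (\<forall>y. E y t \<longleftrightarrow> (\<exists>l\<in>S. codes_seq E y l))"

definition is_tree :: "nat list set \<Rightarrow> bool" where
  "is_tree T \<longleftrightarrow> T \<noteq> {} \<and> (\<forall>t\<in>T. \<forall>s. prefix s t \<longrightarrow> s \<in> T)"

definition is_stem :: "nat list set \<Rightarrow> nat list \<Rightarrow> bool" where
  "is_stem T s \<longleftrightarrow> s \<in> T \<and> (\<forall>t\<in>T. prefix s t \<or> prefix t s)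
     \<and> (\<forall>s'\<in>T. (\<forall>t\<in>T. prefix s' t \<or> prefix t s') \<longrightarrow> prefix s' s)"

definition stem :: "nat list set \<Rightarrow> nat list" where
  "stem T = (THE s. is_stem T s)"

definition hechler :: "nat list set set" where
  "hechler = {T. is_tree T \<and> (\<exists>s. is_stem T s \<and>
        (\<forall>t\<in>T. prefix s t \<longrightarrow> finite {z. t @ [z] \<notin> T}))}"

text \<open>H^M: the Hechler trees that belong to M (membership in H is absolute).\<close>
definition hechler_in :: "('m \<Rightarrow> 'm \<Rightarrow> bool) \<Rightarrow> nat list set set" where
  "hechler_in E = {T \<in> hechler. \<exists>t. codes_tree E t T}"

definition tree_members :: "('m \<Rightarrow> 'm \<Rightarrow> bool) \<Rightarrow> 'm \<Rightarrow> nat list set set" where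
  "tree_members E D = {T. \<exists>y. E y D \<and> codes_tree E y T}"

text \<open>D is (in M) an open dense subset of H^M, ordered by inclusion; these are
  Delta_0 properties in the parameter H^M, hence absolute for transitive M.\<close>
definition open_dense_in :: "('m \<Rightarrow> 'm \<Rightarrow> bool) \<Rightarrow> 'm \<Rightarrow> bool" where
  "open_dense_in E D \<longleftrightarrow>
     (\<forall>y. E y D \<longrightarrow> (\<exists>T\<in>hechler_in E. codes_tree E y T))
   \<and> (\<forall>T\<in>tree_members E D. \<forall>T'\<in>hechler_in E. T' \<subseteq> T \<longrightarrow> T' \<in> tree_members E D)
   \<and> (\<forall>T\<in>hechler_in E. \<exists>T'\<in>tree_members E D. T' \<subseteq> T)"

definition evasive :: "('m \<Rightarrow> 'm \<Rightarrow> bool) \<Rightarrow> nat set \<Rightarrow> bool" where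
  "evasive E A \<longleftrightarrow> infinite A \<and>
     \<not> (\<exists>x B. codes_natset E x B \<and> infinite B \<and> B \<subseteq> A)"

definition ext_A :: "nat set \<Rightarrow> nat list \<Rightarrow> nat list \<Rightarrow> bool" where
  "ext_A A t t' \<longleftrightarrow> prefix t t' \<and> (\<forall>n. length t \<le> n \<and> n < length t' \<longrightarrow> t' ! n \<notin> A)"

definition le_A :: "nat set \<Rightarrow> nat list set \<Rightarrow> nat list set \<Rightarrow> bool" where
  "le_A A T' T \<longleftrightarrow> T' \<subseteq> T \<and> ext_A A (stem T) (stem T')"

end

theory Submission
  imports Defs "HOL-Library.Infinite_Set"
begin

text \<open>Inside \<open>M\<close>, rank the nodes \<open>t \<sqsupseteq> stem(T)\<close> of \<open>T\<close>: \<open>t\<close> has rank \<open>0\<close> if it is the stem of a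
  condition of \<open>\<D>\<close> below \<open>T\<close>, and rank at most \<open>\<beta>\<close> if infinitely many immediate successors of \<open>t\<close>
  have rank below \<open>\<beta>\<close>. The stem of \<open>T\<close> has a rank: otherwise pruning \<open>T\<close> above all ranked nodes
  leaves a Hechler tree of \<open>M\<close>, and the stem of a condition of \<open>\<D>\<close> below it would be ranked.
  Then induct on the rank: at a node \<open>t\<close> of positive rank, the set of \<open>z\<close> for which \<open>t\<^sup>\<frown>z\<close> has
  smaller rank is infinite and belongs to \<open>M\<close>, so by evasiveness it contains some \<open>z \<notin> A\<close>, and
  continuing from \<open>t\<^sup>\<frown>z\<close> yields a condition of \<open>\<D>\<close> whose stem extends \<open>t\<close> avoiding \<open>A\<close>.

  The rank is defined by recursion inside \<open>M\<close>, so it is represented by rank witnesses: sets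
  \<open>R \<in> M\<close> of pairs \<open>(u, \<beta>)\<close>, each justified by the clauses above relative to \<open>R\<close>.\<close>

section \<open>Hechler trees\<close>

lemma is_stem_unique: "is_stem T s \<Longrightarrow> is_stem T s' \<Longrightarrow> s = s'"
  unfolding is_stem_def by (meson prefix_order.antisym)

lemma stem_eqI: "is_stem T s \<Longrightarrow> stem T = s"
  unfolding stem_def using is_stem_unique by blast

lemma hechlerD:
  assumes "T \<in> hechler"
  shows "is_tree T" and "is_stem T (stem T)"
    and "t \<in> T \<Longrightarrow> prefix (stem T) t \<Longrightarrow> finite {z. t @ [z] \<notin> T}"
  using assms stem_eqI unfolding hechler_def by blast+

lemma stem_in_hechler: "T \<in> hechler \<Longrightarrow> stem T \<in> T"
  using hechlerD(2) is_stem_def by blast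

lemma infinite_of_cofinite:
  fixes P :: "nat \<Rightarrow> bool"
  shows "finite {z. \<not> P z} \<Longrightarrow> infinite {z. P z}"
  using finite_Un[of "{z. P z}" "{z. \<not> P z}"] by (auto simp: Un_def)

lemma hechler_infinite_succs:
  "T \<in> hechler \<Longrightarrow> t \<in> T \<Longrightarrow> prefix (stem T) t \<Longrightarrow> infinite {z. t @ [z] \<in> T}"
  using hechlerD(3)[of T t] infinite_of_cofinite[of "\<lambda>z. t @ [z] \<in> T"] by simp

lemma hechlerI:
  assumes tree: "is_tree T" and "s \<in> T" and comparable: "\<And>t. t \<in> T \<Longrightarrow> prefix s t \<or> prefix t s"
    and cofinite: "\<And>t. t \<in> T \<Longrightarrow> prefix s t \<Longrightarrow> finite {z. t @ [z] \<notin> T}"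
  shows "T \<in> hechler" and "stem T = s"
proof -
  have "prefix s' s" if s': "s' \<in> T" and all: "\<forall>t\<in>T. prefix s' t \<or> prefix t s'" for s'
  proof (rule ccontr)
    assume ns: "\<not> prefix s' s"
    then have "prefix s s'" using comparable[OF s'] by blast
    have "infinite {z. s @ [z] \<in> T}"
      using cofinite[OF \<open>s \<in> T\<close>] infinite_of_cofinite[of "\<lambda>z. s @ [z] \<in> T"] by simp
    then have "infinite ({z. s @ [z] \<in> T} - {s' ! length s})" by (rule infinite_remove)
    then have "{z. s @ [z] \<in> T} - {s' ! length s} \<noteq> {}" by (metis finite.emptyI)
    then obtain z where z: "s @ [z] \<in> T" "z \<noteq> s' ! length s" by blast
    have "prefix (s @ [z]) s' \<Longrightarrow> s' ! length s = z" by (auto simp: prefix_def nth_append)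
    moreover have "prefix s' (s @ [z]) \<Longrightarrow> s' = s @ [z]" using ns by (metis prefix_snoc)
    ultimately show False using all z by auto
  qed
  then have "is_stem T s" unfolding is_stem_def using \<open>s \<in> T\<close> comparable by blast
  then show "T \<in> hechler" and "stem T = s"
    using tree cofinite stem_eqI unfolding hechler_def by auto
qed

lemma prefix_stem_of_subset_comparable:
  assumes H: "T' \<in> hechler" and sub: "T' \<subseteq> S" and comparable: "\<forall>l\<in>S. prefix l s \<or> prefix s l"
  shows "prefix s (stem T')"
proof (rule ccontr)
  let ?r = "stem T'"
  assume n: "\<not> prefix s ?r"
  then have "prefix ?r s" "?r \<noteq> s" using comparable sub stem_in_hechler[OF H] by auto
  then have r: "strict_prefix ?r s" by (simp add: strict_prefix_def)
  have "{z. ?r @ [z] \<in> T'} \<subseteq> {s ! length ?r}"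
  proof
    fix z assume "z \<in> {z. ?r @ [z] \<in> T'}"
    then have "prefix (?r @ [z]) s \<or> prefix s (?r @ [z])" using comparable sub by blast
    then have "prefix (?r @ [z]) s" using r by (metis prefix_snoc prefix_order.less_le_not_le)
    then show "z \<in> {s ! length ?r}" by (auto simp: prefix_def nth_append)
  qed
  then have "finite {z. ?r @ [z] \<in> T'}" by (rule finite_subset) simp
  then show False using hechler_infinite_succs[OF H stem_in_hechler[OF H]] by simp
qed

definition prune_cones :: "nat list set \<Rightarrow> nat list \<Rightarrow> (nat list \<Rightarrow> bool) \<Rightarrow> nat list set" where
  "prune_cones T s Q = {l \<in> T. prefix l s \<or> (prefix s l \<and> (\<forall>m. prefix s m \<longrightarrow> prefix m l \<longrightarrow> \<not> Q m))}"

lemma prune_cones_subset: "prune_cones T s Q \<subseteq> T"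
  unfolding prune_cones_def by blast

lemma prune_cones_comparable: "l \<in> prune_cones T s Q \<Longrightarrow> prefix l s \<or> prefix s l"
  unfolding prune_cones_def by blast

lemma prune_cones_not_Q:
  assumes "u \<in> prune_cones T s Q" "\<not> Q s" "prefix s m" "prefix m u"
  shows "\<not> Q m"
proof -
  have "prefix u s \<or> (\<forall>m. prefix s m \<longrightarrow> prefix m u \<longrightarrow> \<not> Q m)"
    using assms(1) unfolding prune_cones_def by blast
  moreover have "prefix u s \<Longrightarrow> m = s"
    using assms(3,4) prefix_order.trans[OF assms(4)] prefix_order.antisym by blast
  ultimately show ?thesis using assms by blast
qed

lemma is_tree_prune_cones:
  assumes tree: "is_tree T" and "s \<in> T"
  shows "is_tree (prune_cones T s Q)"
  unfolding is_tree_def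
proof (intro conjI ballI allI impI)
  have "s \<in> prune_cones T s Q" using \<open>s \<in> T\<close> unfolding prune_cones_def by simp
  then show "prune_cones T s Q \<noteq> {}" by blast
next
  fix t k assume t: "t \<in> prune_cones T s Q" and k: "prefix k t"
  have "k \<in> T" using tree t k prune_cones_subset unfolding is_tree_def by blast
  show "k \<in> prune_cones T s Q"
  proof (cases "prefix k s")
    case True
    then show ?thesis using \<open>k \<in> T\<close> unfolding prune_cones_def by blast
  next
    case False
    then have "\<not> prefix t s" using prefix_order.trans[OF k] by blast
    then have "prefix s t" "\<forall>m. prefix s m \<longrightarrow> prefix m t \<longrightarrow> \<not> Q m"
      using t unfolding prune_cones_def by blast+
    then have "prefix s k" "\<forall>m. prefix s m \<longrightarrow> prefix m k \<longrightarrow> \<not> Q m"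
      using False prefix_same_cases[OF k] prefix_order.trans[OF _ k] by blast+
    then show ?thesis using \<open>k \<in> T\<close> unfolding prune_cones_def by blast
  qed
qed

lemma prune_cones_hechler:
  assumes H: "T \<in> hechler" and "\<not> Q (stem T)"
    and fin: "\<And>u. u \<in> prune_cones T (stem T) Q \<Longrightarrow> prefix (stem T) u \<Longrightarrow> finite {z. u @ [z] \<in> T \<and> Q (u @ [z])}"
  shows "prune_cones T (stem T) Q \<in> hechler" and "stem (prune_cones T (stem T) Q) = stem T"
proof -
  let ?s = "stem T" and ?P = "prune_cones T (stem T) Q"
  have "?s \<in> ?P" using stem_in_hechler[OF H] unfolding prune_cones_def by simp
  moreover have "finite {z. u @ [z] \<notin> ?P}" if u: "u \<in> ?P" "prefix ?s u" for u
  proof -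
    note no_Q = prune_cones_not_Q[OF u(1) \<open>\<not> Q ?s\<close>]
    have "u @ [z] \<in> ?P" if "u @ [z] \<in> T" "\<not> Q (u @ [z])" for z
    proof -
      have "\<not> Q m" if "prefix ?s m" "prefix m (u @ [z])" for m
      proof -
        have "m = u @ [z] \<or> prefix m u" using that(2) by (simp add: prefix_snoc)
        then show ?thesis using no_Q[OF that(1)] \<open>\<not> Q (u @ [z])\<close> by blast
      qed
      moreover have "prefix ?s (u @ [z])" using u(2) by (simp add: prefix_snoc)
      ultimately show ?thesis using \<open>u @ [z] \<in> T\<close> unfolding prune_cones_def by blast
    qed
    then have "{z. u @ [z] \<notin> ?P} \<subseteq> {z. u @ [z] \<notin> T} \<union> {z. u @ [z] \<in> T \<and> Q (u @ [z])}"
      by blast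
    moreover have "finite {z. u @ [z] \<notin> T}" using hechlerD(3)[OF H] u prune_cones_subset by blast
    ultimately show ?thesis using fin[OF u] by (meson finite_Un finite_subset)
  qed
  ultimately show "?P \<in> hechler" "stem ?P = ?s"
    using hechlerI[of ?P ?s] is_tree_prune_cones[OF hechlerD(1)[OF H] stem_in_hechler[OF H]]
      prune_cones_comparable by blast+
qed

lemma ext_A_refl: "ext_A A l l"
  unfolding ext_A_def by auto

lemma ext_A_snoc:
  assumes "ext_A A (l @ [z]) r" and "z \<notin> A"
  shows "ext_A A l r"
proof -
  have p: "prefix (l @ [z]) r" using assms(1) unfolding ext_A_def by blast
  then have "r ! length l = z" by (auto simp: prefix_def nth_append)
  then have "r ! n \<notin> A" if "length l \<le> n" "n < length r" for n
    using assms that unfolding ext_A_def by (cases "n = length l") auto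
  moreover have "prefix l r" using p by (metis prefix_order.trans prefix_snoc prefix_order.refl)
  ultimately show ?thesis unfolding ext_A_def by blast
qed

section \<open>Formulas and their meaning in the model\<close>

text \<open>A formula \<open>foo_fm x \<dots> n\<close> speaks about the variables \<open>x, \<dots>\<close> and uses \<open>n, n + 1, \<dots>\<close>
  as bound variables, so its free variables must be below \<open>n\<close>.\<close>

definition Disj :: "fm \<Rightarrow> fm \<Rightarrow> fm" where "Disj p q = Neg (Conj (Neg p) (Neg q))"
definition Imp :: "fm \<Rightarrow> fm \<Rightarrow> fm" where "Imp p q = Neg (Conj p (Neg q))"
definition Iff :: "fm \<Rightarrow> fm \<Rightarrow> fm" where "Iff p q = Conj (Imp p q) (Imp q p)"
definition Forall :: "nat \<Rightarrow> fm \<Rightarrow> fm" where "Forall i p = Neg (Ex i (Neg p))"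

lemma sat_Disj [simp]: "sat E (Disj p q) env \<longleftrightarrow> sat E p env \<or> sat E q env"
  by (simp add: Disj_def)
lemma sat_Imp [simp]: "sat E (Imp p q) env \<longleftrightarrow> (sat E p env \<longrightarrow> sat E q env)"
  by (simp add: Imp_def)
lemma sat_Iff [simp]: "sat E (Iff p q) env \<longleftrightarrow> (sat E p env \<longleftrightarrow> sat E q env)"
  by (auto simp add: Iff_def)
lemma sat_Forall [simp]: "sat E (Forall i p) env \<longleftrightarrow> (\<forall>x. sat E p (env(i := x)))"
  by (simp add: Forall_def)

lemma fun_upd_below [simp]: "(i::nat) < n \<Longrightarrow> n \<le> m \<Longrightarrow> (f(m := v)) i = f i"
  by simp

definition subset_M :: "('m \<Rightarrow> 'm \<Rightarrow> bool) \<Rightarrow> 'm \<Rightarrow> 'm \<Rightarrow> bool" where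
  "subset_M E a b \<longleftrightarrow> (\<forall>w. E w a \<longrightarrow> E w b)"

definition subset_fm :: "nat \<Rightarrow> nat \<Rightarrow> nat \<Rightarrow> fm" where
  "subset_fm x y n = Forall n (Imp (Mem n x) (Mem n y))"

lemma sat_subset_fm [simp]:
  "x < n \<Longrightarrow> y < n \<Longrightarrow> sat E (subset_fm x y n) env \<longleftrightarrow> subset_M E (env x) (env y)"
  by (simp add: subset_fm_def subset_M_def)

definition comparable_M :: "('m \<Rightarrow> 'm \<Rightarrow> bool) \<Rightarrow> 'm \<Rightarrow> 'm \<Rightarrow> bool" where
  "comparable_M E a b \<longleftrightarrow> subset_M E a b \<or> subset_M E b a"

definition comparable_fm :: "nat \<Rightarrow> nat \<Rightarrow> nat \<Rightarrow> fm" where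
  "comparable_fm x y n = Disj (subset_fm x y n) (subset_fm y x n)"

lemma sat_comparable_fm [simp]:
  "x < n \<Longrightarrow> y < n \<Longrightarrow> sat E (comparable_fm x y n) env \<longleftrightarrow> comparable_M E (env x) (env y)"
  by (simp add: comparable_fm_def comparable_M_def)

definition pair_fm :: "nat \<Rightarrow> nat \<Rightarrow> nat \<Rightarrow> nat \<Rightarrow> fm" where
  "pair_fm p a b n = Forall n (Iff (Mem n p)
     (Disj (Forall (n+1) (Iff (Mem (n+1) n) (Equ (n+1) a)))
           (Forall (n+1) (Iff (Mem (n+1) n) (Disj (Equ (n+1) a) (Equ (n+1) b))))))"

lemma sat_pair_fm [simp]:
  "p < n \<Longrightarrow> a < n \<Longrightarrow> b < n \<Longrightarrow> sat E (pair_fm p a b n) env \<longleftrightarrow> is_pair E (env p) (env a) (env b)"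
  by (simp add: pair_fm_def is_pair_def)

definition stem_M :: "('m \<Rightarrow> 'm \<Rightarrow> bool) \<Rightarrow> 'm \<Rightarrow> 'm \<Rightarrow> bool" where
  "stem_M E d t \<longleftrightarrow> E t d \<and> (\<forall>u. E u d \<longrightarrow> comparable_M E u t)
     \<and> (\<forall>v. E v d \<longrightarrow> (\<forall>u. E u d \<longrightarrow> comparable_M E u v) \<longrightarrow> subset_M E v t)"

definition stem_fm :: "nat \<Rightarrow> nat \<Rightarrow> nat \<Rightarrow> fm" where
  "stem_fm d t n = Conj (Mem t d) (Conj (Forall n (Imp (Mem n d) (comparable_fm n t (n+1))))
     (Forall n (Imp (Mem n d) (Imp (Forall (n+1) (Imp (Mem (n+1) d) (comparable_fm (n+1) n (n+2))))
        (subset_fm n t (n+1))))))"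

lemma sat_stem_fm [simp]:
  "d < n \<Longrightarrow> t < n \<Longrightarrow> sat E (stem_fm d t n) env \<longleftrightarrow> stem_M E (env d) (env t)"
  by (simp add: stem_fm_def stem_M_def)

definition dense_stem_M :: "('m \<Rightarrow> 'm \<Rightarrow> bool) \<Rightarrow> 'm \<Rightarrow> 'm \<Rightarrow> 'm \<Rightarrow> bool" where
  "dense_stem_M E D \<tau> t \<longleftrightarrow> (\<exists>d. E d D \<and> subset_M E d \<tau> \<and> stem_M E d t)"

definition dense_stem_fm :: "nat \<Rightarrow> nat \<Rightarrow> nat \<Rightarrow> nat \<Rightarrow> fm" where
  "dense_stem_fm D \<tau> t n = Ex n (Conj (Mem n D) (Conj (subset_fm n \<tau> (n+1)) (stem_fm n t (n+1))))"

lemma sat_dense_stem_fm [simp]: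
  "D < n \<Longrightarrow> \<tau> < n \<Longrightarrow> t < n \<Longrightarrow>
    sat E (dense_stem_fm D \<tau> t n) env \<longleftrightarrow> dense_stem_M E (env D) (env \<tau>) (env t)"
  by (simp add: dense_stem_fm_def dense_stem_M_def)

text \<open>For codes \<open>u, u'\<close> of sequences, \<open>succ_M E u u'\<close> says that \<open>u'\<close> codes a one-point extension
  of \<open>u\<close>, and \<open>last_val_M E u u' z\<close> that \<open>z\<close> codes its last entry.\<close>

definition succ_M :: "('m \<Rightarrow> 'm \<Rightarrow> bool) \<Rightarrow> 'm \<Rightarrow> 'm \<Rightarrow> bool" where
  "succ_M E u u' \<longleftrightarrow> subset_M E u u' \<and> (\<exists>p. E p u' \<and> \<not> E p u \<and> (\<forall>q. E q u' \<longrightarrow> \<not> E q u \<longrightarrow> q = p))"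

definition succ_fm :: "nat \<Rightarrow> nat \<Rightarrow> nat \<Rightarrow> fm" where
  "succ_fm u u' n = Conj (subset_fm u u' n) (Ex n (Conj (Mem n u') (Conj (Neg (Mem n u))
     (Forall (n+1) (Imp (Mem (n+1) u') (Imp (Neg (Mem (n+1) u)) (Equ (n+1) n)))))))"

lemma sat_succ_fm [simp]:
  "u < n \<Longrightarrow> u' < n \<Longrightarrow> sat E (succ_fm u u' n) env \<longleftrightarrow> succ_M E (env u) (env u')"
  by (simp add: succ_fm_def succ_M_def)

definition last_val_M :: "('m \<Rightarrow> 'm \<Rightarrow> bool) \<Rightarrow> 'm \<Rightarrow> 'm \<Rightarrow> 'm \<Rightarrow> bool" where
  "last_val_M E u u' z \<longleftrightarrow> (\<exists>p. E p u' \<and> \<not> E p u \<and> (\<exists>a. is_pair E p a z))"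

definition last_val_fm :: "nat \<Rightarrow> nat \<Rightarrow> nat \<Rightarrow> nat \<Rightarrow> fm" where
  "last_val_fm u u' z n = Ex n (Conj (Mem n u') (Conj (Neg (Mem n u)) (Ex (n+1) (pair_fm n (n+1) z (n+2)))))"

lemma sat_last_val_fm [simp]:
  "u < n \<Longrightarrow> u' < n \<Longrightarrow> z < n \<Longrightarrow> sat E (last_val_fm u u' z n) env \<longleftrightarrow> last_val_M E (env u) (env u') (env z)"
  by (simp add: last_val_fm_def last_val_M_def)

definition pair_mem_M :: "('m \<Rightarrow> 'm \<Rightarrow> bool) \<Rightarrow> 'm \<Rightarrow> 'm \<Rightarrow> 'm \<Rightarrow> bool" where
  "pair_mem_M E v b R \<longleftrightarrow> (\<exists>p. E p R \<and> is_pair E p v b)"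

definition pair_mem_fm :: "nat \<Rightarrow> nat \<Rightarrow> nat \<Rightarrow> nat \<Rightarrow> fm" where
  "pair_mem_fm v b R n = Ex n (Conj (Mem n R) (pair_fm n v b (n+1)))"

lemma sat_pair_mem_fm [simp]:
  "v < n \<Longrightarrow> b < n \<Longrightarrow> R < n \<Longrightarrow> sat E (pair_mem_fm v b R n) env \<longleftrightarrow> pair_mem_M E (env v) (env b) (env R)"
  by (simp add: pair_mem_fm_def pair_mem_M_def)

definition ranked_below_M :: "('m \<Rightarrow> 'm \<Rightarrow> bool) \<Rightarrow> 'm \<Rightarrow> 'm \<Rightarrow> 'm \<Rightarrow> bool" where
  "ranked_below_M E v b R \<longleftrightarrow> (\<exists>g. E g b \<and> pair_mem_M E v g R)"

definition ranked_below_fm :: "nat \<Rightarrow> nat \<Rightarrow> nat \<Rightarrow> nat \<Rightarrow> fm" where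
  "ranked_below_fm v b R n = Ex n (Conj (Mem n b) (pair_mem_fm v n R (n+1)))"

lemma sat_ranked_below_fm [simp]:
  "v < n \<Longrightarrow> b < n \<Longrightarrow> R < n \<Longrightarrow> sat E (ranked_below_fm v b R n) env \<longleftrightarrow> ranked_below_M E (env v) (env b) (env R)"
  by (simp add: ranked_below_fm_def ranked_below_M_def)

text \<open>"Infinitely many successors of \<open>u\<close> are ranked below \<open>b\<close>", stated without \<open>\<omega>\<close>: every
  successor is exceeded in its last value by one ranked below \<open>b\<close>.\<close>

definition cofinal_succs_M :: "('m \<Rightarrow> 'm \<Rightarrow> bool) \<Rightarrow> 'm \<Rightarrow> 'm \<Rightarrow> 'm \<Rightarrow> 'm \<Rightarrow> bool" where
  "cofinal_succs_M E \<tau> u b R \<longleftrightarrow> (\<forall>u1. E u1 \<tau> \<and> succ_M E u u1 \<longrightarrow>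
     (\<exists>u2. E u2 \<tau> \<and> succ_M E u u2 \<and> ranked_below_M E u2 b R
        \<and> (\<exists>z1 z2. last_val_M E u u1 z1 \<and> last_val_M E u u2 z2 \<and> E z1 z2)))"

definition cofinal_succs_fm :: "nat \<Rightarrow> nat \<Rightarrow> nat \<Rightarrow> nat \<Rightarrow> nat \<Rightarrow> fm" where
  "cofinal_succs_fm \<tau> u b R n = Forall n (Imp (Conj (Mem n \<tau>) (succ_fm u n (n+1)))
     (Ex (n+1) (Conj (Mem (n+1) \<tau>) (Conj (succ_fm u (n+1) (n+2)) (Conj (ranked_below_fm (n+1) b R (n+2))
       (Ex (n+2) (Ex (n+3) (Conj (last_val_fm u n (n+2) (n+4))
         (Conj (last_val_fm u (n+1) (n+3) (n+4)) (Mem (n+2) (n+3)))))))))))"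

lemma sat_cofinal_succs_fm [simp]:
  "\<tau> < n \<Longrightarrow> u < n \<Longrightarrow> b < n \<Longrightarrow> R < n \<Longrightarrow>
    sat E (cofinal_succs_fm \<tau> u b R n) env \<longleftrightarrow> cofinal_succs_M E (env \<tau>) (env u) (env b) (env R)"
  by (simp add: cofinal_succs_fm_def cofinal_succs_M_def)

text \<open>A pair \<open>(u, b)\<close> in a rank witness \<open>R\<close> records that node \<open>u\<close> has rank at most \<open>b\<close>.\<close>

definition rank_witness_M :: "('m \<Rightarrow> 'm \<Rightarrow> bool) \<Rightarrow> 'm \<Rightarrow> 'm \<Rightarrow> 'm \<Rightarrow> bool" where
  "rank_witness_M E D \<tau> R \<longleftrightarrow> (\<forall>p. E p R \<longrightarrow> (\<exists>u b. is_pair E p u b \<and> E u \<tau>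
     \<and> (dense_stem_M E D \<tau> u \<or> cofinal_succs_M E \<tau> u b R)))"

definition rank_witness_fm :: "nat \<Rightarrow> nat \<Rightarrow> nat \<Rightarrow> nat \<Rightarrow> fm" where
  "rank_witness_fm D \<tau> R n = Forall n (Imp (Mem n R) (Ex (n+1) (Ex (n+2)
     (Conj (pair_fm n (n+1) (n+2) (n+3)) (Conj (Mem (n+1) \<tau>)
       (Disj (dense_stem_fm D \<tau> (n+1) (n+3)) (cofinal_succs_fm \<tau> (n+1) (n+2) R (n+3))))))))"

lemma sat_rank_witness_fm [simp]:
  "D < n \<Longrightarrow> \<tau> < n \<Longrightarrow> R < n \<Longrightarrow> sat E (rank_witness_fm D \<tau> R n) env \<longleftrightarrow> rank_witness_M E (env D) (env \<tau>) (env R)"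
  by (simp add: rank_witness_fm_def rank_witness_M_def)

definition ordinal_M :: "('m \<Rightarrow> 'm \<Rightarrow> bool) \<Rightarrow> 'm \<Rightarrow> bool" where
  "ordinal_M E a \<longleftrightarrow> (\<forall>y. E y a \<longrightarrow> subset_M E y a \<and> (\<forall>w. E w y \<longrightarrow> subset_M E w y))"

definition ordinal_fm :: "nat \<Rightarrow> nat \<Rightarrow> fm" where
  "ordinal_fm a n = Forall n (Imp (Mem n a) (Conj (subset_fm n a (n+1))
     (Forall (n+1) (Imp (Mem (n+1) n) (subset_fm (n+1) n (n+2))))))"

lemma sat_ordinal_fm [simp]: "a < n \<Longrightarrow> sat E (ordinal_fm a n) env \<longleftrightarrow> ordinal_M E (env a)"
  by (simp add: ordinal_fm_def ordinal_M_def)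

definition ranks_in_M :: "('m \<Rightarrow> 'm \<Rightarrow> bool) \<Rightarrow> 'm \<Rightarrow> 'm \<Rightarrow> bool" where
  "ranks_in_M E R a \<longleftrightarrow> (\<forall>p. E p R \<longrightarrow> (\<exists>u b. is_pair E p u b \<and> E b a))"

definition ranks_in_fm :: "nat \<Rightarrow> nat \<Rightarrow> nat \<Rightarrow> fm" where
  "ranks_in_fm R a n = Forall n (Imp (Mem n R)
     (Ex (n+1) (Ex (n+2) (Conj (pair_fm n (n+1) (n+2) (n+3)) (Mem (n+2) a)))))"

lemma sat_ranks_in_fm [simp]:
  "R < n \<Longrightarrow> a < n \<Longrightarrow> sat E (ranks_in_fm R a n) env \<longleftrightarrow> ranks_in_M E (env R) (env a)"
  by (simp add: ranks_in_fm_def ranks_in_M_def)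

definition rank_bounded_M :: "('m \<Rightarrow> 'm \<Rightarrow> bool) \<Rightarrow> 'm \<Rightarrow> 'm \<Rightarrow> 'm \<Rightarrow> 'm \<Rightarrow> bool" where
  "rank_bounded_M E D \<tau> v a \<longleftrightarrow> (\<exists>R. rank_witness_M E D \<tau> R \<and> ranks_in_M E R a \<and> (\<exists>b. pair_mem_M E v b R))"

definition rank_bounded_fm :: "nat \<Rightarrow> nat \<Rightarrow> nat \<Rightarrow> nat \<Rightarrow> nat \<Rightarrow> fm" where
  "rank_bounded_fm D \<tau> v a n = Ex n (Conj (rank_witness_fm D \<tau> n (n+1))
     (Conj (ranks_in_fm n a (n+1)) (Ex (n+1) (pair_mem_fm v (n+1) n (n+2)))))"

lemma sat_rank_bounded_fm [simp]:
  "D < n \<Longrightarrow> \<tau> < n \<Longrightarrow> v < n \<Longrightarrow> a < n \<Longrightarrow>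
    sat E (rank_bounded_fm D \<tau> v a n) env \<longleftrightarrow> rank_bounded_M E (env D) (env \<tau>) (env v) (env a)"
  by (simp add: rank_bounded_fm_def rank_bounded_M_def)

definition has_rank_M :: "('m \<Rightarrow> 'm \<Rightarrow> bool) \<Rightarrow> 'm \<Rightarrow> 'm \<Rightarrow> 'm \<Rightarrow> bool" where
  "has_rank_M E D \<tau> v \<longleftrightarrow> (\<exists>a. ordinal_M E a \<and> rank_bounded_M E D \<tau> v a)"

definition has_rank_fm :: "nat \<Rightarrow> nat \<Rightarrow> nat \<Rightarrow> nat \<Rightarrow> fm" where
  "has_rank_fm D \<tau> v n = Ex n (Conj (ordinal_fm n (n+1)) (rank_bounded_fm D \<tau> v n (n+1)))"

lemma sat_has_rank_fm [simp]:
  "D < n \<Longrightarrow> \<tau> < n \<Longrightarrow> v < n \<Longrightarrow> sat E (has_rank_fm D \<tau> v n) env \<longleftrightarrow> has_rank_M E (env D) (env \<tau>) (env v)"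
  by (simp add: has_rank_fm_def has_rank_M_def)

definition least_rank_bound_M :: "('m \<Rightarrow> 'm \<Rightarrow> bool) \<Rightarrow> 'm \<Rightarrow> 'm \<Rightarrow> 'm \<Rightarrow> 'm \<Rightarrow> bool" where
  "least_rank_bound_M E D \<tau> v a \<longleftrightarrow> ordinal_M E a \<and> rank_bounded_M E D \<tau> v a
     \<and> (\<forall>a'. E a' a \<longrightarrow> \<not> rank_bounded_M E D \<tau> v a')"

definition least_rank_bound_fm :: "nat \<Rightarrow> nat \<Rightarrow> nat \<Rightarrow> nat \<Rightarrow> nat \<Rightarrow> fm" where
  "least_rank_bound_fm D \<tau> v a n = Conj (ordinal_fm a n) (Conj (rank_bounded_fm D \<tau> v a n)
     (Forall n (Imp (Mem n a) (Neg (rank_bounded_fm D \<tau> v n (n+1))))))"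

lemma sat_least_rank_bound_fm [simp]:
  "D < n \<Longrightarrow> \<tau> < n \<Longrightarrow> v < n \<Longrightarrow> a < n \<Longrightarrow>
    sat E (least_rank_bound_fm D \<tau> v a n) env \<longleftrightarrow> least_rank_bound_M E (env D) (env \<tau>) (env v) (env a)"
  by (simp add: least_rank_bound_fm_def least_rank_bound_M_def)

section \<open>Set theory in the model\<close>

locale zf_model =
  fixes E :: "'m \<Rightarrow> 'm \<Rightarrow> bool"
  assumes model: "transitive_ZF_model E"
begin

lemmas ZF_axioms = model[unfolded transitive_ZF_model_def]

lemma wf: "wfP E"
  using ZF_axioms by (elim conjE)

lemma mem_irrefl: "\<not> E x x"
  using wfp_imp_asymp[OF wf] by (meson asympD)

lemma extensionality: "(\<And>z. E z x \<longleftrightarrow> E z y) \<Longrightarrow> x = y"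
proof -
  have "\<forall>x y. (\<forall>z. E z x \<longleftrightarrow> E z y) \<longrightarrow> x = y" using ZF_axioms by (elim conjE)
  then show "(\<And>z. E z x \<longleftrightarrow> E z y) \<Longrightarrow> x = y" by blast
qed

lemma separation:
  assumes "\<And>x. sat E \<phi> (env(i := x)) \<longleftrightarrow> P x"
  shows "\<exists>b. \<forall>x. E x b \<longleftrightarrow> E x a \<and> P x"
proof -
  have "\<forall>\<phi> env i a. \<exists>b. \<forall>x. E x b \<longleftrightarrow> E x a \<and> sat E \<phi> (env(i := x))"
    using ZF_axioms by (elim conjE)
  then have "\<exists>b. \<forall>x. E x b \<longleftrightarrow> E x a \<and> sat E \<phi> (env(i := x))" by blast
  then show ?thesis using assms by simp
qed

lemma replacement:
  assumes "i \<noteq> j" and "\<And>x y. sat E \<phi> (env(i := x, j := y)) \<longleftrightarrow> P x y"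
    and "\<forall>x. E x a \<longrightarrow> (\<exists>!y. P x y)"
  shows "\<exists>b. \<forall>x. E x a \<longrightarrow> (\<exists>y. E y b \<and> P x y)"
proof -
  have "\<forall>\<phi> env i j a. i \<noteq> j \<longrightarrow>
         (\<forall>x. E x a \<longrightarrow> (\<exists>!y. sat E \<phi> (env(i := x, j := y)))) \<longrightarrow>
         (\<exists>b. \<forall>x. E x a \<longrightarrow> (\<exists>y. E y b \<and> sat E \<phi> (env(i := x, j := y))))"
    using ZF_axioms by (elim conjE)
  then have "(\<forall>x. E x a \<longrightarrow> (\<exists>!y. sat E \<phi> (env(i := x, j := y)))) \<longrightarrow>
         (\<exists>b. \<forall>x. E x a \<longrightarrow> (\<exists>y. E y b \<and> sat E \<phi> (env(i := x, j := y))))"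
    using assms(1) by blast
  then show ?thesis using assms(2,3) by simp
qed

lemma empty_ex: "\<exists>e. \<forall>z. \<not> E z e"
  using separation[of "Neg (Equ 0 0)" "\<lambda>_. a" 0 "\<lambda>_. False" a] by auto

lemma upair_ex: "\<exists>c. \<forall>x. E x c \<longleftrightarrow> x = a \<or> x = b"
proof -
  have "\<forall>x y. \<exists>z. E x z \<and> E y z" using ZF_axioms by (elim conjE)
  then obtain z where "E a z" "E b z" by blast
  moreover obtain c where "\<forall>x. E x c \<longleftrightarrow> E x z \<and> (x = a \<or> x = b)"
    using separation[of "Disj (Equ 0 1) (Equ 0 2)" "(\<lambda>_. a)(1 := a, 2 := b)" 0 "\<lambda>x. x = a \<or> x = b" z]
    by auto
  ultimately show ?thesis by blast
qed

lemma singleton_ex: "\<exists>c. \<forall>x. E x c \<longleftrightarrow> x = a"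
  using upair_ex[of a a] by simp

lemma Union_ex: "\<exists>u. \<forall>x. E x u \<longleftrightarrow> (\<exists>y. E y a \<and> E x y)"
proof -
  have "\<forall>x. \<exists>u. \<forall>y z. E y x \<and> E z y \<longrightarrow> E z u" using ZF_axioms by (elim conjE)
  then obtain u0 where "\<forall>y z. E y a \<and> E z y \<longrightarrow> E z u0" by blast
  moreover obtain c where "\<forall>x. E x c \<longleftrightarrow> E x u0 \<and> (\<exists>y. E y a \<and> E x y)"
    using separation[of "Ex 1 (Conj (Mem 1 2) (Mem 0 1))" "(\<lambda>_. a)(2 := a)" 0
        "\<lambda>x. \<exists>y. E y a \<and> E x y" u0]
    by auto
  ultimately show ?thesis by blast
qed

lemma Un_ex: "\<exists>c. \<forall>x. E x c \<longleftrightarrow> E x a \<or> E x b"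
proof -
  obtain p where "\<forall>x. E x p \<longleftrightarrow> x = a \<or> x = b" using upair_ex by blast
  moreover obtain u where "\<forall>x. E x u \<longleftrightarrow> (\<exists>y. E y p \<and> E x y)" using Union_ex by blast
  ultimately show ?thesis by auto
qed

lemma insert_ex: "\<exists>c. \<forall>x. E x c \<longleftrightarrow> E x a \<or> x = b"
proof -
  obtain s where "\<forall>x. E x s \<longleftrightarrow> x = b" using singleton_ex by blast
  moreover obtain c where "\<forall>x. E x c \<longleftrightarrow> E x a \<or> E x s" using Un_ex by blast
  ultimately show ?thesis by blast
qed

lemma Pow_ex: "\<exists>p. \<forall>y. subset_M E y x \<longrightarrow> E y p"
proof -
  have "\<forall>x. \<exists>p. \<forall>y. (\<forall>z. E z y \<longrightarrow> E z x) \<longrightarrow> E y p" using ZF_axioms by (elim conjE)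
  then show ?thesis unfolding subset_M_def by blast
qed

lemma pair_ex: "\<exists>p. is_pair E p a b"
proof -
  obtain s where s: "\<forall>x. E x s \<longleftrightarrow> x = a" using singleton_ex by blast
  obtain t where t: "\<forall>x. E x t \<longleftrightarrow> x = a \<or> x = b" using upair_ex by blast
  obtain p where p: "\<forall>x. E x p \<longleftrightarrow> x = s \<or> x = t" using upair_ex by blast
  have "is_pair E p a b" unfolding is_pair_def
  proof (intro allI iffI)
    fix z assume "(\<forall>w. E w z = (w = a)) \<or> (\<forall>w. E w z = (w = a \<or> w = b))"
    then have "z = s \<or> z = t" using s t extensionality by metis
    then show "E z p" using p by auto
  qed (use p s t in auto)
  then show ?thesis by blast
qed

lemma pair_inject:
  assumes "is_pair E p a b" and "is_pair E p a' b'"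
  shows "a = a' \<and> b = b'"
proof -
  obtain s where s: "\<forall>x. E x s \<longleftrightarrow> x = a" using singleton_ex by blast
  obtain t where t: "\<forall>x. E x t \<longleftrightarrow> x = a \<or> x = b" using upair_ex by blast
  obtain t' where t': "\<forall>x. E x t' \<longleftrightarrow> x = a' \<or> x = b'" using upair_ex by blast
  have "E s p" using assms(1) s unfolding is_pair_def by blast
  then have "(\<forall>w. E w s \<longleftrightarrow> w = a') \<or> (\<forall>w. E w s \<longleftrightarrow> w = a' \<or> w = b')"
    using assms(2) unfolding is_pair_def by blast
  then have a: "a = a'" using s by blast
  have "E t p" using assms(1) t unfolding is_pair_def by blast
  then have 1: "(\<forall>w. E w t \<longleftrightarrow> w = a') \<or> (\<forall>w. E w t \<longleftrightarrow> w = a' \<or> w = b')"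
    using assms(2) unfolding is_pair_def by blast
  have "E t' p" using assms(2) t' unfolding is_pair_def by blast
  then have 2: "(\<forall>w. E w t' \<longleftrightarrow> w = a) \<or> (\<forall>w. E w t' \<longleftrightarrow> w = a \<or> w = b)"
    using assms(1) unfolding is_pair_def by blast
  from 1 2 t t' a have "b = b'" by metis
  with a show ?thesis by simp
qed

lemma pair_unique: "is_pair E p a b \<Longrightarrow> is_pair E q a b \<Longrightarrow> p = q"
  unfolding is_pair_def by (rule extensionality) blast

lemma pair_components: "is_pair E p a b \<Longrightarrow> E z p \<Longrightarrow> E w z \<Longrightarrow> w = a \<or> w = b"
  unfolding is_pair_def by blast

lemma pair_snd_in_member: "is_pair E p a b \<Longrightarrow> \<exists>z. E z p \<and> E b z"
  using upair_ex[of a b] unfolding is_pair_def by blast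

lemma codes_nat_unique: "codes_nat E x n \<Longrightarrow> codes_nat E y n \<Longrightarrow> x = y"
proof (induction n arbitrary: x y)
  case 0
  then show ?case by (intro extensionality) simp
next
  case (Suc n)
  then obtain x0 y0 where "codes_nat E x0 n" "\<forall>z. E z x \<longleftrightarrow> E z x0 \<or> z = x0"
    and "codes_nat E y0 n" "\<forall>z. E z y \<longleftrightarrow> E z y0 \<or> z = y0"
    by auto
  with Suc.IH[of x0 y0] show ?case by (intro extensionality) auto
qed

lemma codes_nat_mem_iff: "codes_nat E x n \<Longrightarrow> E y x \<longleftrightarrow> (\<exists>m<n. codes_nat E y m)"
proof (induction n arbitrary: x)
  case 0
  then show ?case by simp
next
  case (Suc n)
  then obtain x0 where x0: "codes_nat E x0 n" "\<forall>z. E z x \<longleftrightarrow> E z x0 \<or> z = x0" by auto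
  have "E y x \<longleftrightarrow> (\<exists>m<n. codes_nat E y m) \<or> y = x0" using x0 Suc.IH by auto
  also have "\<dots> \<longleftrightarrow> (\<exists>m<Suc n. codes_nat E y m)"
    using x0(1) codes_nat_unique less_Suc_eq by metis
  finally show ?case .
qed

lemma codes_nat_inj: "codes_nat E x n \<Longrightarrow> codes_nat E x m \<Longrightarrow> n = m"
  by (metis mem_irrefl linorder_neqE_nat codes_nat_mem_iff)

lemma codes_nat_mem_iff_less: "codes_nat E x m \<Longrightarrow> codes_nat E y n \<Longrightarrow> E x y \<longleftrightarrow> m < n"
  by (metis codes_nat_inj codes_nat_mem_iff)

lemma codes_nat_ex: "\<exists>x. codes_nat E x n"
proof (induction n)
  case 0
  then show ?case using empty_ex by simp
next
  case (Suc n)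
  then obtain x where "codes_nat E x n" by blast
  moreover obtain c where "\<forall>z. E z c \<longleftrightarrow> E z x \<or> z = x" using insert_ex by blast
  ultimately show ?case by auto
qed

lemma codes_seq_memI:
  "codes_seq E y l \<Longrightarrow> i < length l \<Longrightarrow> codes_nat E a i \<Longrightarrow> codes_nat E b (l ! i) \<Longrightarrow>
    is_pair E p a b \<Longrightarrow> E p y"
  unfolding codes_seq_def by blast

lemma codes_seq_memE:
  assumes "codes_seq E y l" and "E p y"
  obtains i a b where "i < length l" "codes_nat E a i" "codes_nat E b (l ! i)" "is_pair E p a b"
  using assms unfolding codes_seq_def by blast

lemma codes_seq_pair_at_length_notin:
  assumes "codes_seq E y l" "codes_nat E a (length l)" "is_pair E p a b"
  shows "\<not> E p y"
proof
  assume "E p y"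
  then obtain i a' b' where "i < length l" "codes_nat E a' i" "is_pair E p a' b'"
    using assms(1) codes_seq_memE by metis
  then show False using assms(2,3) pair_inject codes_nat_inj by (metis less_irrefl)
qed

lemma codes_seq_snoc:
  assumes y: "codes_seq E y l" and p: "is_pair E p a b"
    and a: "codes_nat E a (length l)" and b: "codes_nat E b z"
  shows "codes_seq E y' (l @ [z]) \<longleftrightarrow> (\<forall>q. E q y' \<longleftrightarrow> E q y \<or> q = p)"
proof -
  have "(\<exists>i<length (l @ [z]). \<exists>a b. codes_nat E a i \<and> codes_nat E b ((l @ [z]) ! i) \<and> is_pair E q a b)
        \<longleftrightarrow> E q y \<or> q = p" for q
  proof
    assume "\<exists>i<length (l @ [z]). \<exists>a b. codes_nat E a i \<and> codes_nat E b ((l @ [z]) ! i) \<and> is_pair E q a b"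
    then obtain i a' b' where i: "i < Suc (length l)" "codes_nat E a' i"
      "codes_nat E b' ((l @ [z]) ! i)" "is_pair E q a' b'"
      by auto
    show "E q y \<or> q = p"
    proof (cases "i < length l")
      case True
      then show ?thesis using codes_seq_memI[OF y True i(2) _ i(4)] i(3) by (simp add: nth_append)
    next
      case False
      then have "i = length l" using i(1) by simp
      then have "a' = a" "b' = b" using i a b codes_nat_unique by auto
      then show ?thesis using i(4) p pair_unique by blast
    qed
  next
    assume "E q y \<or> q = p"
    then show "\<exists>i<length (l @ [z]). \<exists>a b. codes_nat E a i \<and> codes_nat E b ((l @ [z]) ! i) \<and> is_pair E q a b"
    proof
      assume "E q y"
      then obtain i a b where "i < length l" "codes_nat E a i" "codes_nat E b (l ! i)" "is_pair E q a b"
        by (rule codes_seq_memE[OF y])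
      then show ?thesis by (intro exI[of _ i]) (auto simp: nth_append)
    qed (use a b p in \<open>intro exI[of _ "length l"], auto\<close>)
  qed
  then show ?thesis unfolding codes_seq_def by blast
qed

lemma codes_seq_ex: "\<exists>y. codes_seq E y l"
proof (induction l rule: rev_induct)
  case Nil
  then show ?case using empty_ex unfolding codes_seq_def by simp
next
  case (snoc z l)
  then obtain y where y: "codes_seq E y l" by blast
  obtain a b p where "codes_nat E a (length l)" "codes_nat E b z" "is_pair E p a b"
    using codes_nat_ex pair_ex by metis
  moreover obtain y' where "\<forall>q. E q y' \<longleftrightarrow> E q y \<or> q = p" using insert_ex by blast
  ultimately show ?case using codes_seq_snoc[OF y] by blast
qed

lemma codes_seq_unique: "codes_seq E y l \<Longrightarrow> codes_seq E y' l \<Longrightarrow> y = y'"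
  unfolding codes_seq_def by (intro extensionality) auto

lemma codes_seq_subset_iff_prefix:
  assumes y: "codes_seq E y l" and y': "codes_seq E y' l'"
  shows "subset_M E y y' \<longleftrightarrow> prefix l l'"
proof
  assume sub: "subset_M E y y'"
  have agree: "i < length l' \<and> l ! i = l' ! i" if "i < length l" for i
  proof -
    obtain a b p where abp: "codes_nat E a i" "codes_nat E b (l ! i)" "is_pair E p a b"
      using codes_nat_ex pair_ex by metis
    then have "E p y'" using codes_seq_memI[OF y that] sub unfolding subset_M_def by blast
    then obtain j a' b' where j: "j < length l'" "codes_nat E a' j" "codes_nat E b' (l' ! j)"
      "is_pair E p a' b'"
      by (rule codes_seq_memE[OF y'])
    then have "a = a'" "b = b'" using pair_inject abp(3) by auto
    then have "i = j" "l ! i = l' ! j" using abp j codes_nat_inj by auto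
    then show ?thesis using j by simp
  qed
  then have "length l \<le> length l'" by (metis leI less_irrefl)
  then have "l = take (length l) l'"
    by (intro nth_equalityI) (use agree in auto)
  then show "prefix l l'" by (metis take_is_prefix)
next
  assume "prefix l l'"
  then obtain zs where zs: "l' = l @ zs" by (auto simp: prefix_def)
  show "subset_M E y y'" unfolding subset_M_def
  proof (intro allI impI)
    fix p assume "E p y"
    then obtain i a b where "i < length l" "codes_nat E a i" "codes_nat E b (l ! i)" "is_pair E p a b"
      by (rule codes_seq_memE[OF y])
    then show "E p y'" using codes_seq_memI[OF y', of i a b p] zs by (auto simp: nth_append)
  qed
qed

lemma codes_seq_inj: "codes_seq E y l \<Longrightarrow> codes_seq E y l' \<Longrightarrow> l = l'"
  using codes_seq_subset_iff_prefix[of y l y l'] codes_seq_subset_iff_prefix[of y l' y l]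
  by (auto simp: subset_M_def intro: prefix_order.antisym)

lemma codes_tree_mem_iff: "codes_tree E t S \<Longrightarrow> codes_seq E y l \<Longrightarrow> E y t \<longleftrightarrow> l \<in> S"
  unfolding codes_tree_def using codes_seq_inj by blast

lemma codes_tree_inj: "codes_tree E t S \<Longrightarrow> codes_tree E t S' \<Longrightarrow> S = S'"
  using codes_tree_mem_iff codes_seq_ex by blast

lemma codes_seq_strict_prefix_new_member:
  assumes y: "codes_seq E y l" and y': "codes_seq E y' l'" and "prefix l l'" "l \<noteq> l'"
  shows "\<exists>q. E q y' \<and> \<not> E q y"
proof -
  have "subset_M E y y'" using codes_seq_subset_iff_prefix[OF y y'] assms(3) by blast
  moreover have "y \<noteq> y'" using codes_seq_inj y y' assms(4) by blast
  ultimately show ?thesis using extensionality unfolding subset_M_def by blast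
qed

lemma succ_M_iff_snoc:
  assumes y: "codes_seq E y l" and y': "codes_seq E y' l'"
  shows "succ_M E y y' \<longleftrightarrow> (\<exists>z. l' = l @ [z])"
proof
  assume "succ_M E y y'"
  then obtain p where sub: "subset_M E y y'"
    and new: "\<And>q. E q y' \<Longrightarrow> \<not> E q y \<Longrightarrow> q = p" and "E p y'" "\<not> E p y"
    unfolding succ_M_def by blast
  then obtain zs where zs: "l' = l @ zs"
    using codes_seq_subset_iff_prefix[OF y y'] by (auto simp: prefix_def)
  have "zs \<noteq> []" using codes_seq_unique[OF y] y' zs \<open>E p y'\<close> \<open>\<not> E p y\<close> by auto
  then obtain z zs' where z: "zs = z # zs'" by (cases zs) auto
  obtain y1 where y1: "codes_seq E y1 (l @ [z])" using codes_seq_ex by blast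
  have y1y': "subset_M E y1 y'" using codes_seq_subset_iff_prefix[OF y1 y'] zs z by simp
  obtain q where "E q y1" "\<not> E q y"
    using codes_seq_strict_prefix_new_member[OF y y1] by auto
  then have "E p y1" using new y1y' unfolding subset_M_def by blast
  have "zs' = []"
  proof (rule ccontr)
    assume "zs' \<noteq> []"
    then obtain r where "E r y'" "\<not> E r y1"
      using codes_seq_strict_prefix_new_member[OF y1 y'] zs z by auto
    moreover have "subset_M E y y1" using codes_seq_subset_iff_prefix[OF y y1] by simp
    ultimately show False using new \<open>E p y1\<close> unfolding subset_M_def by blast
  qed
  then show "\<exists>z. l' = l @ [z]" using zs z by blast
next
  assume "\<exists>z. l' = l @ [z]"
  then obtain z where z: "l' = l @ [z]" by blast
  obtain a b p where abp: "codes_nat E a (length l)" "codes_nat E b z" "is_pair E p a b"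
    using codes_nat_ex pair_ex by metis
  have "\<forall>q. E q y' \<longleftrightarrow> E q y \<or> q = p" using codes_seq_snoc[OF y abp(3,1,2)] y' z by blast
  moreover have "\<not> E p y" using codes_seq_pair_at_length_notin[OF y abp(1,3)] .
  ultimately show "succ_M E y y'" unfolding succ_M_def subset_M_def by blast
qed

lemma last_val_M_iff:
  assumes y: "codes_seq E y l" and y': "codes_seq E y' (l @ [z])"
  shows "last_val_M E y y' x \<longleftrightarrow> codes_nat E x z"
proof -
  obtain a b p where abp: "codes_nat E a (length l)" "codes_nat E b z" "is_pair E p a b"
    using codes_nat_ex pair_ex by metis
  have "\<forall>q. E q y' \<longleftrightarrow> E q y \<or> q = p" using codes_seq_snoc[OF y abp(3,1,2)] y' by blast
  moreover have "\<not> E p y" using codes_seq_pair_at_length_notin[OF y abp(1,3)] .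
  ultimately have "last_val_M E y y' x \<longleftrightarrow> (\<exists>a'. is_pair E p a' x)"
    unfolding last_val_M_def by blast
  also have "\<dots> \<longleftrightarrow> x = b" using abp(3) pair_inject by blast
  also have "\<dots> \<longleftrightarrow> codes_nat E x z" using abp(2) codes_nat_unique by blast
  finally show ?thesis .
qed

definition seq_code :: "nat list \<Rightarrow> 'm" where
  "seq_code l = (SOME y. codes_seq E y l)"

lemma codes_seq_iff_seq_code: "codes_seq E y l \<longleftrightarrow> y = seq_code l"
  unfolding seq_code_def using codes_seq_ex codes_seq_unique by (metis someI_ex)

lemma codes_seq_seq_code: "codes_seq E (seq_code l) l"
  using codes_seq_iff_seq_code by blast

lemma succ_M_seq_code [simp]: "succ_M E (seq_code l) (seq_code l') \<longleftrightarrow> (\<exists>z. l' = l @ [z])"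
  using succ_M_iff_snoc codes_seq_seq_code by blast

lemma last_val_M_seq_code [simp]:
  "last_val_M E (seq_code l) (seq_code (l @ [z])) x \<longleftrightarrow> codes_nat E x z"
  using last_val_M_iff codes_seq_seq_code by blast

lemma subset_M_seq_code [simp]: "subset_M E (seq_code l) (seq_code l') \<longleftrightarrow> prefix l l'"
  using codes_seq_subset_iff_prefix codes_seq_iff_seq_code by blast

lemma comparable_M_seq_code [simp]:
  "comparable_M E (seq_code l) (seq_code l') \<longleftrightarrow> prefix l l' \<or> prefix l' l"
  unfolding comparable_M_def by simp

lemma codes_tree_mem_seq_code: "codes_tree E d S \<Longrightarrow> E (seq_code l) d \<longleftrightarrow> l \<in> S"
  using codes_tree_mem_iff codes_seq_iff_seq_code by blast

lemma codes_tree_All_iff: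
  "codes_tree E d S \<Longrightarrow> (\<forall>u. E u d \<longrightarrow> P u) \<longleftrightarrow> (\<forall>l\<in>S. P (seq_code l))"
  unfolding codes_tree_def codes_seq_iff_seq_code by auto

lemma codes_tree_subset_M_iff:
  assumes "codes_tree E d S" and "codes_tree E t T"
  shows "subset_M E d t \<longleftrightarrow> S \<subseteq> T"
  unfolding subset_M_def codes_tree_All_iff[OF assms(1)] codes_tree_mem_seq_code[OF assms(2)] by blast

lemma stem_M_iff_is_stem:
  assumes d: "codes_tree E d S"
  shows "stem_M E d (seq_code l) \<longleftrightarrow> is_stem S l"
  unfolding stem_M_def is_stem_def codes_tree_All_iff[OF d] codes_tree_mem_seq_code[OF d]
  by simp blast

lemma ordinal_M_mem: "ordinal_M E a \<Longrightarrow> E y a \<Longrightarrow> ordinal_M E y"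
  unfolding ordinal_M_def subset_M_def by blast

lemma ordinal_M_trichotomy: "ordinal_M E a \<Longrightarrow> ordinal_M E b \<Longrightarrow> E a b \<or> a = b \<or> E b a"
proof (induction a arbitrary: b rule: wfp_induct_rule[OF wf])
  case (1 a)
  note IH_a = "1.IH"
  show ?case using 1(3)
  proof (induction b rule: wfp_induct_rule[OF wf])
    case (1 b)
    show ?case
    proof (rule ccontr)
      assume c: "\<not> (E a b \<or> a = b \<or> E b a)"
      have "E z b" if za: "E z a" for z
      proof -
        have "E z b \<or> z = b \<or> E b z"
          using IH_a[OF za ordinal_M_mem[OF \<open>ordinal_M E a\<close> za] \<open>ordinal_M E b\<close>] .
        moreover have "\<not> E b z" using c za \<open>ordinal_M E a\<close> unfolding ordinal_M_def subset_M_def by blast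
        ultimately show ?thesis using c za by blast
      qed
      moreover have "E z a" if zb: "E z b" for z
      proof -
        have "E a z \<or> a = z \<or> E z a" using "1.IH"[OF zb ordinal_M_mem[OF \<open>ordinal_M E b\<close> zb]] .
        moreover have "\<not> E a z" using c zb \<open>ordinal_M E b\<close> unfolding ordinal_M_def subset_M_def by blast
        ultimately show ?thesis using c zb by blast
      qed
      ultimately show False using c extensionality by blast
    qed
  qed
qed

lemma ordinal_M_insert_self: "ordinal_M E b \<Longrightarrow> (\<forall>x. E x c \<longleftrightarrow> E x b \<or> x = b) \<Longrightarrow> ordinal_M E c"
  unfolding ordinal_M_def subset_M_def by blast

lemma ordinal_M_Union:
  "(\<forall>w. E w c \<longleftrightarrow> (\<exists>a. E a B \<and> ordinal_M E a \<and> E w a)) \<Longrightarrow> ordinal_M E c"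
  unfolding ordinal_M_def subset_M_def by blast

lemma ordinal_M_one: "(\<forall>x. \<not> E x e) \<Longrightarrow> (\<forall>x. E x c \<longleftrightarrow> x = e) \<Longrightarrow> ordinal_M E c"
  unfolding ordinal_M_def subset_M_def by auto

lemma ex1_least_ordinal_M:
  assumes "ordinal_M E a0" "P a0"
  shows "\<exists>!a. ordinal_M E a \<and> P a \<and> (\<forall>a'. E a' a \<longrightarrow> \<not> P a')"
proof -
  obtain a where a: "ordinal_M E a" "P a" "\<And>a'. E a' a \<Longrightarrow> \<not> (ordinal_M E a' \<and> P a')"
    using wf[unfolded wfp_eq_minimal, rule_format, of a0 "{a. ordinal_M E a \<and> P a}"] assms by blast
  then have "\<forall>a'. E a' a \<longrightarrow> \<not> P a'" using ordinal_M_mem by blast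
  then show ?thesis
    using a ordinal_M_trichotomy by (intro ex1I[of _ a]) blast+
qed

lemma cofinal_succs_M_mono:
  "cofinal_succs_M E \<tau> u b R \<Longrightarrow> subset_M E R R' \<Longrightarrow> cofinal_succs_M E \<tau> u b R'"
  unfolding cofinal_succs_M_def ranked_below_M_def pair_mem_M_def subset_M_def by blast

lemma rank_bounded_M_mono:
  "rank_bounded_M E D \<tau> v a \<Longrightarrow> subset_M E a b \<Longrightarrow> rank_bounded_M E D \<tau> v b"
  unfolding rank_bounded_M_def ranks_in_M_def subset_M_def by blast

lemma dense_stem_M_has_rank:
  assumes "dense_stem_M E D \<tau> u" and "E u \<tau>"
  shows "has_rank_M E D \<tau> u"
proof -
  obtain e where e: "\<forall>z. \<not> E z e" using empty_ex by blast
  obtain o1 where o1: "\<forall>x. E x o1 \<longleftrightarrow> x = e" using singleton_ex by blast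
  obtain p where p: "is_pair E p u e" using pair_ex by blast
  obtain R where R: "\<forall>x. E x R \<longleftrightarrow> x = p" using singleton_ex by blast
  have "rank_witness_M E D \<tau> R" unfolding rank_witness_M_def
  proof (intro allI impI)
    fix q assume "E q R"
    then have "q = p" using R by blast
    then show "\<exists>u' b. is_pair E q u' b \<and> E u' \<tau> \<and> (dense_stem_M E D \<tau> u' \<or> cofinal_succs_M E \<tau> u' b R)"
      using p assms by blast
  qed
  moreover have "ranks_in_M E R o1" unfolding ranks_in_M_def
  proof (intro allI impI)
    fix q assume "E q R"
    then have "q = p" using R by blast
    then show "\<exists>u' b. is_pair E q u' b \<and> E b o1" using p o1 by blast
  qed
  moreover have "pair_mem_M E u e R" unfolding pair_mem_M_def using R p by blast
  ultimately show ?thesis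
    using ordinal_M_one[OF e o1] unfolding has_rank_M_def rank_bounded_M_def by blast
qed

lemma ex1_least_rank_bound_M: "has_rank_M E D \<tau> v \<Longrightarrow> \<exists>!a. least_rank_bound_M E D \<tau> v a"
  unfolding has_rank_M_def least_rank_bound_M_def
  using ex1_least_ordinal_M[where P = "rank_bounded_M E D \<tau> v"] by (elim exE conjE) simp

text \<open>Replacement collects the least rank bounds of the members of \<open>a\<close>;
  their union bounds all of them.\<close>

lemma ex_common_rank_bound_M:
  assumes "\<forall>x. E x a \<longrightarrow> has_rank_M E D \<tau> x"
  shows "\<exists>\<beta>. ordinal_M E \<beta> \<and> (\<forall>x. E x a \<longrightarrow> rank_bounded_M E D \<tau> x \<beta>)"
proof -
  have "\<exists>bs. \<forall>x. E x a \<longrightarrow> (\<exists>\<alpha>. E \<alpha> bs \<and> least_rank_bound_M E D \<tau> x \<alpha>)"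
    using ex1_least_rank_bound_M assms
    by (intro replacement[where \<phi> = "least_rank_bound_fm 2 3 0 4 5"
          and env = "(\<lambda>_. a)(2 := D, 3 := \<tau>)" and i = 0 and j = 4]) simp_all
  then obtain bs where bs: "\<forall>x. E x a \<longrightarrow> (\<exists>\<alpha>. E \<alpha> bs \<and> least_rank_bound_M E D \<tau> x \<alpha>)" by blast
  obtain U where U: "\<forall>w. E w U \<longleftrightarrow> (\<exists>\<alpha>. E \<alpha> bs \<and> E w \<alpha>)" using Union_ex by blast
  have "\<exists>\<beta>. \<forall>w. E w \<beta> \<longleftrightarrow> E w U \<and> (\<exists>\<alpha>. E \<alpha> bs \<and> ordinal_M E \<alpha> \<and> E w \<alpha>)"
    by (rule separation[where \<phi> = "Ex 5 (Conj (Mem 5 1) (Conj (ordinal_fm 5 6) (Mem 0 5)))"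
          and env = "(\<lambda>_. a)(1 := bs)" and i = 0]) simp
  then obtain \<beta> where \<beta>: "\<forall>w. E w \<beta> \<longleftrightarrow> (\<exists>\<alpha>. E \<alpha> bs \<and> ordinal_M E \<alpha> \<and> E w \<alpha>)" using U by blast
  have "rank_bounded_M E D \<tau> x \<beta>" if x: "E x a" for x
  proof -
    obtain \<alpha> where "E \<alpha> bs" "least_rank_bound_M E D \<tau> x \<alpha>" using bs x by blast
    then show ?thesis
      using \<beta> rank_bounded_M_mono unfolding least_rank_bound_M_def subset_M_def by blast
  qed
  then show ?thesis using ordinal_M_Union[OF \<beta>] by blast
qed

text \<open>The pairs of a rank witness with ranks in \<open>\<beta>\<close> lie in \<open>\<P>(\<P>(\<tau> \<union> \<beta>))\<close>, so
  all these witnesses have a union in \<open>M\<close>.\<close>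

lemma ex_Union_rank_witnesses:
  "\<exists>W. \<forall>p. E p W \<longleftrightarrow> (\<exists>R. rank_witness_M E D \<tau> R \<and> ranks_in_M E R \<beta> \<and> E p R)"
proof -
  obtain U where U: "\<forall>x. E x U \<longleftrightarrow> E x \<tau> \<or> E x \<beta>" using Un_ex by blast
  obtain P1 where P1: "\<forall>z. subset_M E z U \<longrightarrow> E z P1" using Pow_ex by blast
  obtain P2 where P2: "\<forall>z. subset_M E z P1 \<longrightarrow> E z P2" using Pow_ex by blast
  have "E p P2" if R: "rank_witness_M E D \<tau> R" "ranks_in_M E R \<beta>" "E p R" for R p
  proof -
    obtain u b where ub: "is_pair E p u b" "E u \<tau>"
      using R unfolding rank_witness_M_def by blast
    obtain u' b' where "is_pair E p u' b'" "E b' \<beta>"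
      using R unfolding ranks_in_M_def by blast
    then have "E b \<beta>" using pair_inject[OF ub(1)] by blast
    have "subset_M E z U" if "E z p" for z
      unfolding subset_M_def using U pair_components[OF ub(1) that] ub(2) \<open>E b \<beta>\<close> by blast
    then have "subset_M E p P1" using P1 unfolding subset_M_def[of E p] by blast
    then show ?thesis using P2 by blast
  qed
  moreover have "\<exists>W. \<forall>p. E p W \<longleftrightarrow> E p P2 \<and> (\<exists>R. rank_witness_M E D \<tau> R \<and> ranks_in_M E R \<beta> \<and> E p R)"
    by (rule separation[where \<phi> = "Ex 5 (Conj (rank_witness_fm 2 3 5 6) (Conj (ranks_in_fm 5 1 6) (Mem 0 5)))"
          and env = "(\<lambda>_. \<beta>)(1 := \<beta>, 2 := D, 3 := \<tau>)" and i = 0]) simp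
  ultimately show ?thesis by blast
qed

lemma Union_rank_witnesses:
  assumes W: "\<forall>p. E p W \<longleftrightarrow> (\<exists>R. rank_witness_M E D \<tau> R \<and> ranks_in_M E R \<beta> \<and> E p R)"
  shows "rank_witness_M E D \<tau> W" and "ranks_in_M E W \<beta>"
    and "rank_bounded_M E D \<tau> u \<beta> \<Longrightarrow> ranked_below_M E u \<beta> W"
proof -
  have sub: "subset_M E R W" if "rank_witness_M E D \<tau> R" "ranks_in_M E R \<beta>" for R
    using W that unfolding subset_M_def by blast
  show "rank_witness_M E D \<tau> W" unfolding rank_witness_M_def
  proof (intro allI impI)
    fix p assume "E p W"
    then obtain R where R: "rank_witness_M E D \<tau> R" "ranks_in_M E R \<beta>" "E p R" using W by blast
    then show "\<exists>u b. is_pair E p u b \<and> E u \<tau> \<and> (dense_stem_M E D \<tau> u \<or> cofinal_succs_M E \<tau> u b W)"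
      using cofinal_succs_M_mono[OF _ sub[OF R(1,2)]] unfolding rank_witness_M_def by blast
  qed
  show "ranks_in_M E W \<beta>" using W unfolding ranks_in_M_def by blast
  assume "rank_bounded_M E D \<tau> u \<beta>"
  then obtain R g p where R: "rank_witness_M E D \<tau> R" "ranks_in_M E R \<beta>" "E p R" "is_pair E p u g"
    unfolding rank_bounded_M_def pair_mem_M_def by blast
  then have "E g \<beta>" using pair_inject unfolding ranks_in_M_def by metis
  then show "ranked_below_M E u \<beta> W"
    using R sub unfolding ranked_below_M_def pair_mem_M_def subset_M_def by blast
qed

text \<open>The witness for \<open>y\<close> is \<open>R \<union> {(y, \<beta>)}\<close>, with ranks in \<open>\<beta> + 1\<close>.\<close>

lemma has_rank_M_extend:
  assumes R: "rank_witness_M E D \<tau> R" "ranks_in_M E R \<beta>" and "ordinal_M E \<beta>"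
    and "E y \<tau>" and cofinal: "cofinal_succs_M E \<tau> y \<beta> R"
  shows "has_rank_M E D \<tau> y"
proof -
  obtain p where p: "is_pair E p y \<beta>" using pair_ex by blast
  obtain R' where R': "\<forall>x. E x R' \<longleftrightarrow> E x R \<or> x = p" using insert_ex by blast
  obtain \<beta>' where \<beta>': "\<forall>x. E x \<beta>' \<longleftrightarrow> E x \<beta> \<or> x = \<beta>" using insert_ex by blast
  have sub: "subset_M E R R'" using R' unfolding subset_M_def by blast
  have "rank_witness_M E D \<tau> R'"
    unfolding rank_witness_M_def
  proof (intro allI impI)
    fix q assume "E q R'"
    then consider "E q R" | "q = p" using R' by blast
    then show "\<exists>u b. is_pair E q u b \<and> E u \<tau> \<and> (dense_stem_M E D \<tau> u \<or> cofinal_succs_M E \<tau> u b R')"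
    proof cases
      case 1
      then show ?thesis using R(1) sub cofinal_succs_M_mono unfolding rank_witness_M_def by blast
    next
      case 2
      then show ?thesis using p \<open>E y \<tau>\<close> cofinal_succs_M_mono[OF cofinal sub] by blast
    qed
  qed
  moreover have "ranks_in_M E R' \<beta>'" using R(2) R' \<beta>' p unfolding ranks_in_M_def by blast
  moreover have "pair_mem_M E y \<beta> R'" using R' p unfolding pair_mem_M_def by blast
  ultimately show ?thesis
    using ordinal_M_insert_self[OF \<open>ordinal_M E \<beta>\<close> \<beta>'] unfolding has_rank_M_def rank_bounded_M_def by blast
qed

end

section \<open>Ranks of the nodes of a Hechler tree of the model\<close>

locale hechler_in_model = zf_model E for E :: "'m \<Rightarrow> 'm \<Rightarrow> bool" +
  fixes D \<tau> :: 'm and T :: "nat list set"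
  assumes open_dense: "open_dense_in E D"
    and codes_T: "codes_tree E \<tau> T" and hechler_T: "T \<in> hechler"
begin

lemma mem_tau_iff [simp]: "E (seq_code l) \<tau> \<longleftrightarrow> l \<in> T"
  using codes_tree_mem_seq_code[OF codes_T] .

lemma mem_tauE:
  assumes "E y \<tau>"
  obtains l where "l \<in> T" "y = seq_code l"
  using assms codes_T unfolding codes_tree_def codes_seq_iff_seq_code by blast

lemma tree_membersD:
  assumes "T' \<in> tree_members E D"
  obtains d where "E d D" "codes_tree E d T'" "T' \<in> hechler"
proof -
  obtain d where d: "E d D" "codes_tree E d T'" using assms unfolding tree_members_def by blast
  then obtain T'' where "T'' \<in> hechler_in E" "codes_tree E d T''"
    using open_dense unfolding open_dense_in_def by blast
  then show thesis using that d codes_tree_inj unfolding hechler_in_def by blast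
qed

lemma dense_stem_M_imp_member:
  assumes "dense_stem_M E D \<tau> (seq_code l)"
  shows "\<exists>T'\<in>tree_members E D. T' \<subseteq> T \<and> stem T' = l"
proof -
  obtain d where d: "E d D" "subset_M E d \<tau>" "stem_M E d (seq_code l)"
    using assms unfolding dense_stem_M_def by blast
  obtain T' where T': "codes_tree E d T'"
    using open_dense d(1) unfolding open_dense_in_def by blast
  have "T' \<in> tree_members E D" using d(1) T' unfolding tree_members_def by blast
  moreover have "T' \<subseteq> T" using codes_tree_subset_M_iff[OF T' codes_T] d(2) by blast
  moreover have "stem T' = l" using stem_M_iff_is_stem[OF T'] d(3) stem_eqI by blast
  ultimately show ?thesis by blast
qed

lemma dense_stem_M_of_member:
  assumes "T' \<in> tree_members E D" and "T' \<subseteq> T"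
  shows "dense_stem_M E D \<tau> (seq_code (stem T'))"
proof -
  obtain d where d: "E d D" "codes_tree E d T'" "T' \<in> hechler" using assms(1) by (rule tree_membersD)
  have "subset_M E d \<tau>" using codes_tree_subset_M_iff[OF d(2) codes_T] assms(2) by blast
  moreover have "stem_M E d (seq_code (stem T'))"
    using stem_M_iff_is_stem[OF d(2)] hechlerD(2)[OF d(3)] by blast
  ultimately show ?thesis using d(1) unfolding dense_stem_M_def by blast
qed

definition ranked :: "nat list \<Rightarrow> bool" where
  "ranked l \<longleftrightarrow> has_rank_M E D \<tau> (seq_code l)"

lemma ranked_if_infinitely_many_ranked_succs:
  assumes "l \<in> T" and inf: "infinite {z. l @ [z] \<in> T \<and> ranked (l @ [z])}"
  shows "ranked l"
proof -
  let ?y = "seq_code l"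
  have "\<exists>a. \<forall>x. E x a \<longleftrightarrow> E x \<tau> \<and> succ_M E ?y x \<and> has_rank_M E D \<tau> x"
    by (rule separation[where \<phi> = "Conj (succ_fm 1 0 5) (has_rank_fm 2 3 0 5)"
          and env = "(\<lambda>_. ?y)(1 := ?y, 2 := D, 3 := \<tau>)" and i = 0]) simp
  then obtain a where a: "\<forall>x. E x a \<longleftrightarrow> E x \<tau> \<and> succ_M E ?y x \<and> has_rank_M E D \<tau> x" by blast
  then obtain \<beta> where \<beta>: "ordinal_M E \<beta>" "\<forall>x. E x a \<longrightarrow> rank_bounded_M E D \<tau> x \<beta>"
    using ex_common_rank_bound_M[of a D \<tau>] by blast
  obtain W where W: "\<forall>p. E p W \<longleftrightarrow> (\<exists>R. rank_witness_M E D \<tau> R \<and> ranks_in_M E R \<beta> \<and> E p R)"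
    using ex_Union_rank_witnesses by blast
  have "cofinal_succs_M E \<tau> ?y \<beta> W" unfolding cofinal_succs_M_def
  proof (intro allI impI)
    fix u1 assume u1: "E u1 \<tau> \<and> succ_M E ?y u1"
    then obtain l1 where "u1 = seq_code l1" by (auto elim: mem_tauE)
    then obtain w1 where w1: "u1 = seq_code (l @ [w1])" using u1 by auto
    obtain w2 where w2: "w1 < w2" "l @ [w2] \<in> T" "ranked (l @ [w2])"
      using inf unfolding infinite_nat_iff_unbounded by blast
    let ?u2 = "seq_code (l @ [w2])"
    have "E ?u2 a" using a w2(2,3) unfolding ranked_def by simp
    then have "ranked_below_M E ?u2 \<beta> W" using \<beta>(2) Union_rank_witnesses(3)[OF W] by blast
    moreover obtain c1 c2 where c: "codes_nat E c1 w1" "codes_nat E c2 w2" using codes_nat_ex by blast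
    moreover have "E c1 c2" using codes_nat_mem_iff_less[OF c] w2(1) by blast
    ultimately show "\<exists>u2. E u2 \<tau> \<and> succ_M E ?y u2 \<and> ranked_below_M E u2 \<beta> W
        \<and> (\<exists>z1 z2. last_val_M E ?y u1 z1 \<and> last_val_M E ?y u2 z2 \<and> E z1 z2)"
      using w1 w2(2) by (intro exI[of _ ?u2]) auto
  qed
  then show ?thesis
    using has_rank_M_extend Union_rank_witnesses(1,2)[OF W] \<beta>(1) \<open>l \<in> T\<close> unfolding ranked_def by simp
qed

lemma prune_cones_ranked_in_M: "\<exists>t. codes_tree E t (prune_cones T (stem T) ranked)"
proof -
  let ?s = "stem T" and ?\<sigma> = "seq_code (stem T)"
  let ?unranked_between = "\<lambda>x. \<forall>v. E v \<tau> \<longrightarrow> subset_M E ?\<sigma> v \<longrightarrow> subset_M E v x \<longrightarrow> \<not> has_rank_M E D \<tau> v"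
  have "\<exists>t. \<forall>x. E x t \<longleftrightarrow> E x \<tau> \<and> (subset_M E x ?\<sigma> \<or> (subset_M E ?\<sigma> x \<and> ?unranked_between x))"
    by (rule separation[where \<phi> = "Disj (subset_fm 0 1 5) (Conj (subset_fm 1 0 5)
          (Forall 5 (Imp (Mem 5 3) (Imp (subset_fm 1 5 6) (Imp (subset_fm 5 0 6) (Neg (has_rank_fm 2 3 5 6)))))))"
          and env = "(\<lambda>_. ?\<sigma>)(1 := ?\<sigma>, 2 := D, 3 := \<tau>)" and i = 0]) simp
  then obtain t where t: "\<forall>x. E x t \<longleftrightarrow> E x \<tau> \<and> (subset_M E x ?\<sigma> \<or> (subset_M E ?\<sigma> x \<and> ?unranked_between x))"
    by blast
  have tree: "is_tree T" using hechlerD(1)[OF hechler_T] .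
  have "?unranked_between (seq_code l) \<longleftrightarrow> (\<forall>m\<in>T. prefix ?s m \<longrightarrow> prefix m l \<longrightarrow> \<not> ranked m)" for l
    by (simp add: codes_tree_All_iff[OF codes_T] ranked_def)
  also have "\<dots> l \<longleftrightarrow> (\<forall>m. prefix ?s m \<longrightarrow> prefix m l \<longrightarrow> \<not> ranked m)" if "l \<in> T" for l
    using tree that unfolding is_tree_def by blast
  finally have "E (seq_code l) t \<longleftrightarrow> l \<in> prune_cones T ?s ranked" for l
    using t unfolding prune_cones_def by auto
  moreover have "E y t \<Longrightarrow> \<exists>l. y = seq_code l" for y using t by (blast elim: mem_tauE)
  ultimately have "codes_tree E t (prune_cones T ?s ranked)"
    unfolding codes_tree_def codes_seq_iff_seq_code by blast
  then show ?thesis by blast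
qed

lemma ranked_stem: "ranked (stem T)"
proof (rule ccontr)
  let ?s = "stem T" and ?P = "prune_cones T (stem T) ranked"
  assume unranked: "\<not> ranked ?s"
  have "finite {z. u @ [z] \<in> T \<and> ranked (u @ [z])}" if u: "u \<in> ?P" "prefix ?s u" for u
  proof -
    have "\<not> ranked u" using prune_cones_not_Q[OF u(1) unranked u(2)] by simp
    moreover have "u \<in> T" using u(1) prune_cones_subset by blast
    ultimately show ?thesis using ranked_if_infinitely_many_ranked_succs by blast
  qed
  then have "?P \<in> hechler" using prune_cones_hechler(1)[where Q = ranked, OF hechler_T unranked] by blast
  then have "?P \<in> hechler_in E" using prune_cones_ranked_in_M unfolding hechler_in_def by blast
  then obtain T' where T': "T' \<in> tree_members E D" "T' \<subseteq> ?P"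
    using open_dense unfolding open_dense_in_def by blast
  then have "T' \<in> hechler" by (auto elim: tree_membersD)
  then have "stem T' \<in> ?P" and "prefix ?s (stem T')"
    using T'(2) stem_in_hechler prefix_stem_of_subset_comparable prune_cones_comparable by blast+
  then have "\<not> ranked (stem T')" using prune_cones_not_Q unranked by blast
  moreover have "stem T' \<in> T" using \<open>stem T' \<in> ?P\<close> prune_cones_subset by blast
  moreover have "dense_stem_M E D \<tau> (seq_code (stem T'))"
    using dense_stem_M_of_member T' prune_cones_subset by blast
  ultimately show False using dense_stem_M_has_rank unfolding ranked_def by simp
qed

lemma succ_values_ranked_below_in_M:
  "\<exists>x. codes_natset E x {z. l @ [z] \<in> T \<and> ranked_below_M E (seq_code (l @ [z])) b R}"
proof -
  let ?y = "seq_code l"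
  obtain U1 where U1: "\<forall>x. E x U1 \<longleftrightarrow> (\<exists>u. E u \<tau> \<and> E x u)" using Union_ex by blast
  obtain U2 where U2: "\<forall>x. E x U2 \<longleftrightarrow> (\<exists>p. E p U1 \<and> E x p)" using Union_ex by blast
  obtain U3 where U3: "\<forall>x. E x U3 \<longleftrightarrow> (\<exists>z. E z U2 \<and> E x z)" using Union_ex by blast
  have "\<exists>x. \<forall>c. E c x \<longleftrightarrow> E c U3
      \<and> (\<exists>u. E u \<tau> \<and> succ_M E ?y u \<and> last_val_M E ?y u c \<and> ranked_below_M E u b R)"
    by (rule separation[where \<phi> = "Ex 5 (Conj (Mem 5 3) (Conj (succ_fm 1 5 6)
          (Conj (last_val_fm 1 5 0 6) (ranked_below_fm 5 2 4 6))))"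
          and env = "(\<lambda>_. ?y)(1 := ?y, 2 := b, 3 := \<tau>, 4 := R)" and i = 0]) simp
  then obtain x where x: "\<forall>c. E c x \<longleftrightarrow> E c U3
      \<and> (\<exists>u. E u \<tau> \<and> succ_M E ?y u \<and> last_val_M E ?y u c \<and> ranked_below_M E u b R)"
    by blast
  have in_U3: "E c U3" if uc: "last_val_M E ?y u c" "E u \<tau>" for u c
  proof -
    obtain p a where "E p u" "is_pair E p a c" using uc(1) unfolding last_val_M_def by blast
    then obtain z where "E z p" "E c z" using pair_snd_in_member by blast
    then show ?thesis using U1 U2 U3 \<open>E p u\<close> uc(2) by blast
  qed
  have "E c x \<longleftrightarrow> (\<exists>z. l @ [z] \<in> T \<and> ranked_below_M E (seq_code (l @ [z])) b R \<and> codes_nat E c z)"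
    for c
  proof
    assume "E c x"
    then obtain u where u: "E u \<tau>" "succ_M E ?y u" "last_val_M E ?y u c" "ranked_below_M E u b R"
      using x by blast
    obtain l' where "l' \<in> T" "u = seq_code l'" using u(1) by (rule mem_tauE)
    then obtain z where "u = seq_code (l @ [z])" "l @ [z] \<in> T" using u(2) by auto
    then show "\<exists>z. l @ [z] \<in> T \<and> ranked_below_M E (seq_code (l @ [z])) b R \<and> codes_nat E c z"
      using u(3,4) by auto
  next
    assume "\<exists>z. l @ [z] \<in> T \<and> ranked_below_M E (seq_code (l @ [z])) b R \<and> codes_nat E c z"
    then obtain z where z: "l @ [z] \<in> T" "ranked_below_M E (seq_code (l @ [z])) b R" "codes_nat E c z"
      by blast
    then have "last_val_M E ?y (seq_code (l @ [z])) c" by simp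
    then have "E c U3" by (rule in_U3) (simp add: z(1))
    then show "E c x" using x z by auto
  qed
  then show ?thesis unfolding codes_natset_def by blast
qed

lemma succ_values_ranked_below_infinite:
  assumes cofinal: "cofinal_succs_M E \<tau> (seq_code l) b R" and "l \<in> T" "prefix (stem T) l"
  shows "infinite {z. l @ [z] \<in> T \<and> ranked_below_M E (seq_code (l @ [z])) b R}" (is "infinite ?S")
proof
  assume "finite ?S"
  then obtain N where "?S \<subseteq> {..<N}" using finite_nat_bounded by blast
  then have N: "\<forall>z\<in>?S. z < N" by blast
  have "infinite {z. l @ [z] \<in> T}" using hechler_infinite_succs[OF hechler_T assms(2,3)] .
  then obtain z1 where z1: "N \<le> z1" "l @ [z1] \<in> T" unfolding infinite_nat_iff_unbounded_le by blast
  then have "E (seq_code (l @ [z1])) \<tau> \<and> succ_M E (seq_code l) (seq_code (l @ [z1]))" by simp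
  then obtain u2 c1 c2 where u2: "E u2 \<tau>" "succ_M E (seq_code l) u2" "ranked_below_M E u2 b R"
      and c: "last_val_M E (seq_code l) (seq_code (l @ [z1])) c1" "last_val_M E (seq_code l) u2 c2" "E c1 c2"
    using cofinal unfolding cofinal_succs_M_def by blast
  obtain l2 where "l2 \<in> T" "u2 = seq_code l2" using u2(1) by (rule mem_tauE)
  then obtain z2 where z2: "u2 = seq_code (l @ [z2])" "l @ [z2] \<in> T" using u2(2) by auto
  have "codes_nat E c1 z1" "codes_nat E c2 z2" using c(1,2) z2(1) by simp_all
  then have "z1 < z2" using c(3) codes_nat_mem_iff_less by blast
  moreover have "z2 < N" using N z2 u2(3) by blast
  ultimately show False using z1(1) by simp
qed

lemma ranked_node_extends_A:
  assumes evasive: "evasive E A" and W: "rank_witness_M E D \<tau> R"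
  shows "pair_mem_M E (seq_code l) b R \<Longrightarrow> prefix (stem T) l \<Longrightarrow>
    \<exists>T'\<in>tree_members E D. T' \<subseteq> T \<and> ext_A A l (stem T')"
proof (induction b arbitrary: l rule: wfp_induct_rule[OF wf])
  case (1 b l)
  then obtain p where p: "E p R" "is_pair E p (seq_code l) b" unfolding pair_mem_M_def by blast
  then obtain u b' where "is_pair E p u b'" "E u \<tau>" "dense_stem_M E D \<tau> u \<or> cofinal_succs_M E \<tau> u b' R"
    using W unfolding rank_witness_M_def by blast
  moreover have "u = seq_code l" "b' = b" using pair_inject[OF p(2)] calculation(1) by simp_all
  ultimately have "l \<in> T" and "dense_stem_M E D \<tau> (seq_code l) \<or> cofinal_succs_M E \<tau> (seq_code l) b R"
    by simp_all
  then show ?case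
  proof (elim disjE)
    assume "dense_stem_M E D \<tau> (seq_code l)"
    then obtain T' where "T' \<in> tree_members E D" "T' \<subseteq> T" "stem T' = l"
      using dense_stem_M_imp_member by blast
    then show ?thesis using ext_A_refl[of A l] by auto
  next
    let ?S = "{z. l @ [z] \<in> T \<and> ranked_below_M E (seq_code (l @ [z])) b R}"
    assume "cofinal_succs_M E \<tau> (seq_code l) b R"
    then have "infinite ?S" using succ_values_ranked_below_infinite \<open>l \<in> T\<close> "1.prems"(2) by blast
    moreover obtain x where "codes_natset E x ?S" using succ_values_ranked_below_in_M by blast
    ultimately have "\<not> ?S \<subseteq> A" using evasive unfolding evasive_def by blast
    then obtain z where "z \<notin> A" "ranked_below_M E (seq_code (l @ [z])) b R" by blast
    then obtain g where "E g b" "pair_mem_M E (seq_code (l @ [z])) g R" unfolding ranked_below_M_def by blast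
    moreover have "prefix (stem T) (l @ [z])" using "1.prems"(2) by (simp add: prefix_snoc)
    ultimately obtain T' where "T' \<in> tree_members E D" "T' \<subseteq> T" "ext_A A (l @ [z]) (stem T')"
      using "1.IH" by blast
    then show ?thesis using ext_A_snoc \<open>z \<notin> A\<close> by blast
  qed
qed

end

theorem lemma5p4:
  fixes E :: "'m \<Rightarrow> 'm \<Rightarrow> bool" and A :: "nat set" and D :: 'm and T :: "nat list set"
  assumes "transitive_ZF_model E"
    and "evasive E A"
    and "open_dense_in E D"
    and "T \<in> hechler_in E"
  shows "\<exists>T'\<in>tree_members E D. le_A A T' T"
proof -
  obtain \<tau> where "codes_tree E \<tau> T" "T \<in> hechler" using assms(4) unfolding hechler_in_def by blast
  then interpret hechler_in_model E D \<tau> T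
    using assms(1,3) by unfold_locales
  obtain R b where "rank_witness_M E D \<tau> R" "pair_mem_M E (seq_code (stem T)) b R"
    using ranked_stem unfolding ranked_def has_rank_M_def rank_bounded_M_def by blast
  then have "\<exists>T'\<in>tree_members E D. T' \<subseteq> T \<and> ext_A A (stem T) (stem T')"
    using ranked_node_extends_A[OF assms(2)] by blast
  then show ?thesis unfolding le_A_def by blast
qed

end
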